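(* Let $0<r'<r<1$. The map of condensed abelian groups $\theta_{r'}:\mathbb{Z}((T))_r\to\underline{\mathbb{R}}$, $\sum a_nT^n\mapsto\big(s\mapsto\sum a_n(s)(r')^n\big)$, is an epimorphism; i.e. for every extremally disconnected set $S$ the map $\mathbb{Z}((T))_r(S)\to C(S,\mathbb{R})$ is surjective.
   Context: Extremally disconnected sets are the projective objects in the category of compact Hausdorff spaces. For $0<r<1$ and extremally disconnected $S$, $\mathbb{Z}((T))_r(S)$ is the ring of formal sums $\sum_{n\ge k}a_nT^n$ (some $k\in\mathbb{Z}$) with $a_n\in C(S,\mathbb{Z})$ such that there is $c>0$ with $\sum_n|a_n(s)|r^n\le c$ for all $s\in S$; this defines a condensed ring $\mathbb{Z}((T))_r$. $\underline{\mathbb{R}}$ is $S\mapsto C(S,\mathbb{R})$. *)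

theory Defs
  imports "HOL-Analysis.Analysis"
begin

definition extremally_disconnected :: "'a topology \<Rightarrow> bool" where
  "extremally_disconnected X \<longleftrightarrow>
     compact_space X \<and> Hausdorff_space X \<and>
     (\<forall>U. openin X U \<longrightarrow> openin X (X closure_of U))"

text \<open>Sections of the condensed ring Z((T))_r over S: families of coefficients
a n \<in> C(S,Z) (n \<in> Z), vanishing for n below some k, with
sum_n |a_n(s)| r^n bounded uniformly in s.  Coefficient functions are only
relevant on topspace S.\<close>
definition laurent_r :: "'a topology \<Rightarrow> real \<Rightarrow> (int \<Rightarrow> 'a \<Rightarrow> int) set" where
  "laurent_r S r = {a.
     (\<forall>n. continuous_map S euclidean (a n)) \<and>
     (\<exists>k. \<forall>n<k. \<forall>s\<in>topspace S. a n s = 0) \<and>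
     (\<exists>c>0. \<forall>s\<in>topspace S.
        (\<lambda>n. real_of_int \<bar>a n s\<bar> * r powi n) summable_on UNIV \<and>
        (\<Sum>\<^sub>\<infinity>n. real_of_int \<bar>a n s\<bar> * r powi n) \<le> c)}"

definition theta :: "real \<Rightarrow> (int \<Rightarrow> 'a \<Rightarrow> int) \<Rightarrow> 'a \<Rightarrow> real" where
  "theta r' a s = (\<Sum>\<^sub>\<infinity>n. real_of_int (a n s) * r' powi n)"

end

theory Submission
  imports Defs
begin

text \<open>On an extremally disconnected space the closures of the sublevel sets {g < m} of a
  continuous real function g are clopen; this yields a continuous integer-valued function c with
  g \<le> c \<le> g + 1. Applying it greedily, h(0) = f and h(k+1) = (h(k) - c(k)) / r' with c(k) the
  ceiling of h(k), keeps the remainders bounded by max (sup \<bar>f\<bar>) (1/r'), so f = \<Sum> c(k) r'^k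
  with continuous, uniformly bounded integer digits. Bounded digits make \<Sum> \<bar>c(k)\<bar> r^k uniformly
  bounded for every r < 1, so the series is a section of Z((T))_r.\<close>

definition sublevel_closure :: "'a topology \<Rightarrow> ('a \<Rightarrow> real) \<Rightarrow> int \<Rightarrow> 'a set" where
  "sublevel_closure S g m = S closure_of {x \<in> topspace S. g x < of_int m}"

lemma sublevel_closure_mono:
  "m \<le> n \<Longrightarrow> sublevel_closure S g m \<subseteq> sublevel_closure S g n"
  unfolding sublevel_closure_def by (intro closure_of_mono) auto

lemma openin_sublevel_closure:
  assumes "extremally_disconnected S" and "continuous_map S euclidean g"
  shows "openin S (sublevel_closure S g m)"
proof -
  have "openin S {x \<in> topspace S. g x \<in> {..<of_int m}}"
    using assms(2) by (rule openin_continuous_map_preimage) auto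
  with assms(1) show ?thesis
    unfolding extremally_disconnected_def sublevel_closure_def by simp
qed

lemma sublevel_closure_le:
  assumes "continuous_map S euclidean g" and "s \<in> sublevel_closure S g m"
  shows "g s \<le> of_int m"
proof -
  have "closedin S {x \<in> topspace S. g x \<in> {..of_int m}}"
    using assms(1) by (rule closedin_continuous_map_preimage) auto
  then have "sublevel_closure S g m \<subseteq> {x \<in> topspace S. g x \<in> {..of_int m}}"
    unfolding sublevel_closure_def by (rule closure_of_minimal[rotated]) auto
  with assms(2) show ?thesis by auto
qed

lemma sublevel_closure_less:
  "s \<in> topspace S \<Longrightarrow> g s < of_int m \<Longrightarrow> s \<in> sublevel_closure S g m"
  using closure_of_subset[of "{x \<in> topspace S. g x < of_int m}" S]
  unfolding sublevel_closure_def by auto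

text \<open>The clopen sets sublevel_closure S g m increase with m, so each point s lies in exactly
  one difference sublevel_closure S g m - sublevel_closure S g (m - 1), and this m is either
  \<lceil>g s\<rceil> or \<lceil>g s\<rceil> + 1. It is a continuous substitute for the ceiling of g.\<close>
definition clopen_ceiling :: "'a topology \<Rightarrow> ('a \<Rightarrow> real) \<Rightarrow> 'a \<Rightarrow> int" where
  "clopen_ceiling S g s =
     (if s \<in> sublevel_closure S g \<lceil>g s\<rceil> then \<lceil>g s\<rceil> else \<lceil>g s\<rceil> + 1)"

lemma clopen_ceiling_mem:
  assumes "continuous_map S euclidean g" and "s \<in> topspace S"
  shows "s \<in> sublevel_closure S g (clopen_ceiling S g s)"
    and "s \<notin> sublevel_closure S g (clopen_ceiling S g s - 1)"
proof -
  have "s \<in> sublevel_closure S g (\<lceil>g s\<rceil> + 1)"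
    using le_of_int_ceiling[of "g s"] by (intro sublevel_closure_less[OF assms(2)]) linarith
  then show "s \<in> sublevel_closure S g (clopen_ceiling S g s)"
    unfolding clopen_ceiling_def by simp
  have "s \<notin> sublevel_closure S g (\<lceil>g s\<rceil> - 1)"
    using sublevel_closure_le[OF assms(1), of s "\<lceil>g s\<rceil> - 1"] ceiling_correct[of "g s"] by auto
  then show "s \<notin> sublevel_closure S g (clopen_ceiling S g s - 1)"
    unfolding clopen_ceiling_def by simp
qed

lemma clopen_ceiling_bounds:
  assumes "continuous_map S euclidean g" and "s \<in> topspace S"
  shows "g s \<le> of_int (clopen_ceiling S g s)" and "of_int (clopen_ceiling S g s) \<le> g s + 1"
proof -
  note c = clopen_ceiling_mem[OF assms]
  show "g s \<le> of_int (clopen_ceiling S g s)"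
    using sublevel_closure_le[OF assms(1) c(1)] .
  have "\<not> g s < of_int (clopen_ceiling S g s - 1)"
    using c(2) sublevel_closure_less[OF assms(2)] by blast
  then show "of_int (clopen_ceiling S g s) \<le> g s + 1"
    by simp
qed

lemma clopen_ceiling_eq_iff:
  assumes "continuous_map S euclidean g" and "s \<in> topspace S"
  shows "clopen_ceiling S g s = m \<longleftrightarrow>
           s \<in> sublevel_closure S g m \<and> s \<notin> sublevel_closure S g (m - 1)"
proof
  assume m: "s \<in> sublevel_closure S g m \<and> s \<notin> sublevel_closure S g (m - 1)"
  note c = clopen_ceiling_mem[OF assms]
  have "\<not> clopen_ceiling S g s \<le> m - 1"
    using c(1) m sublevel_closure_mono[of "clopen_ceiling S g s" "m - 1" S g] by blast
  moreover have "\<not> m \<le> clopen_ceiling S g s - 1"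
    using c(2) m sublevel_closure_mono[of m "clopen_ceiling S g s - 1" S g] by blast
  ultimately show "clopen_ceiling S g s = m"
    by linarith
qed (use clopen_ceiling_mem[OF assms] in blast)

lemma continuous_map_open_fibres:
  fixes c :: "'a \<Rightarrow> 'b" and \<phi> :: "'b \<Rightarrow> 'c::topological_space"
  assumes "\<And>m. openin S {x \<in> topspace S. c x = m}"
  shows "continuous_map S euclidean (\<lambda>x. \<phi> (c x))"
proof -
  have "{x \<in> topspace S. \<phi> (c x) \<in> U} = (\<Union>m\<in>\<phi> -` U. {x \<in> topspace S. c x = m})" for U
    by auto
  then show ?thesis
    using assms by (auto simp: continuous_map_def)
qed

lemma continuous_map_clopen_ceiling:
  fixes \<phi> :: "int \<Rightarrow> 'c::topological_space"
  assumes "extremally_disconnected S" and g: "continuous_map S euclidean g"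
  shows "continuous_map S euclidean (\<lambda>x. \<phi> (clopen_ceiling S g x))"
proof (rule continuous_map_open_fibres[where c = "clopen_ceiling S g"])
  fix m
  have "{x \<in> topspace S. clopen_ceiling S g x = m}
          = sublevel_closure S g m - sublevel_closure S g (m - 1)"
    using clopen_ceiling_eq_iff[OF g] closure_of_subset_topspace[of S]
    unfolding sublevel_closure_def by blast
  moreover have "closedin S (sublevel_closure S g (m - 1))"
    by (simp add: sublevel_closure_def)
  ultimately show "openin S {x \<in> topspace S. clopen_ceiling S g x = m}"
    using openin_sublevel_closure[OF assms] by (simp add: openin_diff)
qed

primrec greedy_remainder :: "'a topology \<Rightarrow> real \<Rightarrow> ('a \<Rightarrow> real) \<Rightarrow> nat \<Rightarrow> 'a \<Rightarrow> real" where
  "greedy_remainder S q f 0 = f"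
| "greedy_remainder S q f (Suc k) =
     (\<lambda>s. (greedy_remainder S q f k s - of_int (clopen_ceiling S (greedy_remainder S q f k) s)) / q)"

lemma continuous_map_greedy_remainder:
  assumes "extremally_disconnected S" and "continuous_map S euclidean f"
  shows "continuous_map S euclidean (greedy_remainder S q f k)"
proof (induction k)
  case (Suc k)
  let ?h = "greedy_remainder S q f k"
  have "continuous_map S euclidean (\<lambda>s. inverse q * (?h s - of_int (clopen_ceiling S ?h s)))"
    using continuous_map_clopen_ceiling[OF assms(1) Suc]
    by (intro continuous_map_real_mult_left continuous_map_diff Suc)
  then show ?case by (simp add: divide_inverse mult.commute)
qed (use assms(2) in simp)

lemma greedy_remainder_bound:
  assumes "extremally_disconnected S" and f: "continuous_map S euclidean f"
    and "0 < q" and "s \<in> topspace S" and "\<bar>f s\<bar> \<le> B"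
  shows "\<bar>greedy_remainder S q f k s\<bar> \<le> max B (1 / q)"
proof (cases k)
  case (Suc j)
  let ?h = "greedy_remainder S q f j"
  have "- 1 \<le> ?h s - of_int (clopen_ceiling S ?h s)" "?h s - of_int (clopen_ceiling S ?h s) \<le> 0"
    using clopen_ceiling_bounds[OF continuous_map_greedy_remainder[OF assms(1) f, of q j] assms(4)]
    by linarith+
  then have "\<bar>?h s - of_int (clopen_ceiling S ?h s)\<bar> / q \<le> 1 / q"
    using \<open>0 < q\<close> by (intro divide_right_mono) auto
  then show ?thesis
    using \<open>0 < q\<close> by (simp add: Suc abs_divide)
qed (use assms(5) in simp)

lemma remainder_expansion_sums:
  fixes h d :: "nat \<Rightarrow> real"
  assumes "0 < q" and "q < 1"
    and step: "\<And>k. h (Suc k) = (h k - d k) / q" and bound: "\<And>k. \<bar>h k\<bar> \<le> B"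
  shows "(\<lambda>k. d k * q ^ k) sums h 0"
proof -
  have partial_sum: "(\<Sum>k<N. d k * q ^ k) = h 0 - h N * q ^ N" for N
  proof (induction N)
    case (Suc N)
    have "h (Suc N) * q ^ Suc N = (h N - d N) * q ^ N"
      using step[of N] \<open>0 < q\<close> by simp
    with Suc show ?case
      by (simp add: algebra_simps)
  qed simp
  have "\<forall>N. norm (h N * q ^ N) \<le> B * q ^ N"
    using bound \<open>0 < q\<close> by (simp add: abs_mult mult_right_mono)
  moreover have "(\<lambda>N. B * q ^ N) \<longlonglongrightarrow> 0"
    using assms(1,2) by (intro tendsto_mult_right_zero LIMSEQ_power_zero) auto
  ultimately have "(\<lambda>N. h N * q ^ N) \<longlonglongrightarrow> 0"
    by (rule Lim_null_comparison[OF always_eventually])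
  then have "(\<lambda>N. h 0 - h N * q ^ N) \<longlonglongrightarrow> h 0 - 0"
    by (intro tendsto_diff tendsto_const)
  then show ?thesis
    unfolding sums_def partial_sum by simp
qed

lemma extremally_disconnected_digit_expansion:
  fixes q :: real
  assumes ed: "extremally_disconnected S" and "0 < q" and "q < 1"
    and f: "continuous_map S euclidean f"
  obtains A :: "nat \<Rightarrow> 'a \<Rightarrow> int" and C where
    "\<And>k. continuous_map S euclidean (A k)"
    "\<And>k s. s \<in> topspace S \<Longrightarrow> \<bar>real_of_int (A k s)\<bar> \<le> C"
    "\<And>s. s \<in> topspace S \<Longrightarrow> (\<lambda>k. of_int (A k s) * q ^ k) sums f s"
proof -
  define h where "h = greedy_remainder S q f"
  define A where "A k = clopen_ceiling S (h k)" for k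
  have h: "continuous_map S euclidean (h k)" for k
    unfolding h_def using continuous_map_greedy_remainder[OF ed f] .
  have "compact_space S"
    using ed by (simp add: extremally_disconnected_def)
  then have "compact (f ` topspace S)"
    using image_compactin[OF _ f] by (simp add: compact_space_def)
  then obtain B where "\<forall>y \<in> f ` topspace S. \<bar>y\<bar> \<le> B"
    using compact_imp_bounded bounded_real by blast
  then have B: "\<And>s. s \<in> topspace S \<Longrightarrow> \<bar>f s\<bar> \<le> B"
    by blast
  define C where "C = max B (1 / q) + 1"
  have hB: "\<bar>h k s\<bar> \<le> max B (1 / q)" if "s \<in> topspace S" for k s
    unfolding h_def using greedy_remainder_bound[OF ed f \<open>0 < q\<close> that B[OF that]] .
  have "continuous_map S euclidean (A k)" for k
    unfolding A_def using continuous_map_clopen_ceiling[OF ed h, of id] by simp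
  moreover have "\<bar>real_of_int (A k s)\<bar> \<le> C" if "s \<in> topspace S" for k s
    using clopen_ceiling_bounds[OF h that, of k] hB[OF that, of k]
    unfolding A_def C_def by linarith
  moreover have "(\<lambda>k. of_int (A k s) * q ^ k) sums f s" if "s \<in> topspace S" for s
  proof -
    have "(\<lambda>k. of_int (A k s) * q ^ k) sums h 0 s"
      using assms(2,3) hB[OF that] by (intro remainder_expansion_sums) (simp_all add: h_def A_def)
    then show ?thesis by (simp add: h_def)
  qed
  ultimately show ?thesis by (rule that)
qed

lemma summable_bounded_times_power:
  fixes d :: "nat \<Rightarrow> real"
  assumes "\<And>k. \<bar>d k\<bar> \<le> C" and "0 \<le> q" and "q < 1"
  shows "summable (\<lambda>k. \<bar>d k\<bar> * q ^ k)" and "(\<Sum>k. \<bar>d k\<bar> * q ^ k) \<le> C / (1 - q)"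
proof -
  have geometric: "(\<lambda>k. C * q ^ k) sums (C / (1 - q))"
    using sums_mult[OF geometric_sums[of q], of C] assms(2,3) by simp
  have le: "\<bar>d k\<bar> * q ^ k \<le> C * q ^ k" for k
    using assms(1,2) by (simp add: mult_right_mono)
  show summable: "summable (\<lambda>k. \<bar>d k\<bar> * q ^ k)"
    using le assms(2) by (intro summable_comparison_test'[OF sums_summable[OF geometric]]) auto
  show "(\<Sum>k. \<bar>d k\<bar> * q ^ k) \<le> C / (1 - q)"
    using suminf_le[OF le summable sums_summable[OF geometric]] geometric by (simp add: sums_iff)
qed

lemma has_sum_extend_nat_to_int:
  fixes u :: "nat \<Rightarrow> 'a::banach"
  assumes "summable (\<lambda>k. norm (u k))"
  shows "((\<lambda>n::int. if n < 0 then 0 else u (nat n)) has_sum (\<Sum>k. u k)) UNIV"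
proof -
  let ?v = "\<lambda>n::int. if n < 0 then 0 else u (nat n)"
  have "(u has_sum (\<Sum>k. u k)) UNIV"
    using norm_summable_imp_has_sum[OF assms summable_sums[OF summable_norm_cancel[OF assms]]] .
  then have "((?v \<circ> int) has_sum (\<Sum>k. u k)) UNIV"
    by (simp add: o_def)
  then have "(?v has_sum (\<Sum>k. u k)) (range int)"
    by (simp add: has_sum_reindex)
  moreover have "n < 0" if "n \<notin> range int" for n :: int
    using that by (cases n rule: int_cases) auto
  ultimately show ?thesis
    using has_sum_cong_neutral[of "range int" UNIV ?v ?v] by auto
qed

definition laurent_of_nat :: "(nat \<Rightarrow> 'a \<Rightarrow> int) \<Rightarrow> int \<Rightarrow> 'a \<Rightarrow> int" where
  "laurent_of_nat A n s = (if n < 0 then 0 else A (nat n) s)"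

lemma laurent_of_nat_in_laurent_r:
  assumes "0 < r" and "r < 1"
    and cont: "\<And>k. continuous_map S euclidean (A k)"
    and bound: "\<And>k s. s \<in> topspace S \<Longrightarrow> \<bar>real_of_int (A k s)\<bar> \<le> C"
  shows "laurent_of_nat A \<in> laurent_r S r"
  unfolding laurent_r_def
proof (intro CollectI conjI allI)
  show "continuous_map S euclidean (laurent_of_nat A n)" for n
    using cont by (cases "n < 0") (simp_all add: laurent_of_nat_def[abs_def])
  show "\<exists>k. \<forall>n<k. \<forall>s\<in>topspace S. laurent_of_nat A n s = 0"
    by (auto simp: laurent_of_nat_def)
  show "\<exists>c>0. \<forall>s\<in>topspace S.
          (\<lambda>n. real_of_int \<bar>laurent_of_nat A n s\<bar> * r powi n) summable_on UNIV \<and>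
          (\<Sum>\<^sub>\<infinity>n. real_of_int \<bar>laurent_of_nat A n s\<bar> * r powi n) \<le> c"
  proof (intro exI[of _ "\<bar>C\<bar> / (1 - r) + 1"] conjI ballI)
    show "0 < \<bar>C\<bar> / (1 - r) + 1"
      using assms(2) by (simp add: add_nonneg_pos)
    fix s assume s: "s \<in> topspace S"
    let ?u = "\<lambda>k. \<bar>real_of_int (A k s)\<bar> * r ^ k"
    have summable: "summable ?u" and le: "(\<Sum>k. ?u k) \<le> C / (1 - r)"
      using summable_bounded_times_power[OF bound[OF s] less_imp_le[OF assms(1)] assms(2)] by auto
    have extend: "(\<lambda>n. real_of_int \<bar>laurent_of_nat A n s\<bar> * r powi n)
                    = (\<lambda>n. if n < 0 then 0 else ?u (nat n))"
      by (simp add: fun_eq_iff laurent_of_nat_def power_int_def)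
    have "summable (\<lambda>k. norm (?u k))"
      using summable assms(1) by (simp add: abs_mult)
    then have sum: "((\<lambda>n. real_of_int \<bar>laurent_of_nat A n s\<bar> * r powi n) has_sum (\<Sum>k. ?u k)) UNIV"
      unfolding extend by (rule has_sum_extend_nat_to_int)
    then show "(\<lambda>n. real_of_int \<bar>laurent_of_nat A n s\<bar> * r powi n) summable_on UNIV"
      by (rule has_sum_imp_summable)
    have "(\<Sum>\<^sub>\<infinity>n. real_of_int \<bar>laurent_of_nat A n s\<bar> * r powi n) = (\<Sum>k. ?u k)"
      using sum by (rule infsumI)
    also have "\<dots> \<le> C / (1 - r)"
      by (rule le)
    also have "\<dots> \<le> \<bar>C\<bar> / (1 - r)"
      using assms(2) by (intro divide_right_mono) auto
    finally show "(\<Sum>\<^sub>\<infinity>n. real_of_int \<bar>laurent_of_nat A n s\<bar> * r powi n) \<le> \<bar>C\<bar> / (1 - r) + 1"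
      by linarith
  qed
qed

lemma theta_laurent_of_nat:
  assumes "0 \<le> q" and "q < 1" and "\<And>k. \<bar>real_of_int (A k s)\<bar> \<le> C"
    and "(\<lambda>k. of_int (A k s) * q ^ k) sums L"
  shows "theta q (laurent_of_nat A) s = L"
proof -
  let ?u = "\<lambda>k. real_of_int (A k s) * q ^ k"
  have "summable (\<lambda>k. norm (?u k))"
    using summable_bounded_times_power(1)[OF assms(3,1,2)] assms(1) by (simp add: abs_mult)
  then have "((\<lambda>n. if n < 0 then 0 else ?u (nat n)) has_sum (\<Sum>k. ?u k)) UNIV"
    by (rule has_sum_extend_nat_to_int)
  moreover have "(\<lambda>n. real_of_int (laurent_of_nat A n s) * q powi n)
                   = (\<lambda>n. if n < 0 then 0 else ?u (nat n))"
    by (simp add: fun_eq_iff laurent_of_nat_def power_int_def)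
  ultimately show ?thesis
    using assms(4) unfolding theta_def by (simp add: infsumI sums_iff)
qed

theorem mainTheorem16:
  fixes S :: "'a topology" and r r' :: real
  assumes "0 < r'" and "r' < r" and "r < 1"
    and "extremally_disconnected S"
  shows "\<forall>f :: 'a \<Rightarrow> real. continuous_map S euclidean f \<longrightarrow>
           (\<exists>a\<in>laurent_r S r. \<forall>s\<in>topspace S. theta r' a s = f s)"
proof (intro allI impI)
  fix f :: "'a \<Rightarrow> real"
  assume f: "continuous_map S euclidean f"
  have "0 < r" and "r' < 1"
    using assms by linarith+
  obtain A :: "nat \<Rightarrow> 'a \<Rightarrow> int" and C where
    cont: "\<And>k. continuous_map S euclidean (A k)" and
    bound: "\<And>k s. s \<in> topspace S \<Longrightarrow> \<bar>real_of_int (A k s)\<bar> \<le> C" and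
    expansion: "\<And>s. s \<in> topspace S \<Longrightarrow> (\<lambda>k. of_int (A k s) * r' ^ k) sums f s"
    using extremally_disconnected_digit_expansion[OF assms(4,1) \<open>r' < 1\<close> f] by blast
  have "laurent_of_nat A \<in> laurent_r S r"
    using \<open>0 < r\<close> assms(3) cont bound by (rule laurent_of_nat_in_laurent_r)
  moreover have "theta r' (laurent_of_nat A) s = f s" if "s \<in> topspace S" for s
    using assms(1) \<open>r' < 1\<close> bound[OF that] expansion[OF that]
    by (intro theta_laurent_of_nat) auto
  ultimately show "\<exists>a\<in>laurent_r S r. \<forall>s\<in>topspace S. theta r' a s = f s"
    by blast
qed

end
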